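(* Let $G_1$ and $G_2$ be vertex-disjoint graphs with arithmetic IASIs $f_1$ and $f_2$. Then the join $G_1+G_2$ admits an arithmetic IASI (whose restrictions to $V(G_1)$ and $V(G_2)$ are $f_1$ and $f_2$) if and only if for every vertex $u$ of $G_1$ and every vertex $v$ of $G_2$, the deterministic index of one of $u,v$ equals $k$ times the deterministic index of the other for some positive integer $k$, where $k$ is at most the set-indexing number of the vertex having the smaller deterministic index.
   Context: All graphs are simple, finite, with no isolated vertices; all sets are finite subsets of $\mathbb{N}_0$; $A+B=\{a+b:a\in A,b\in B\}$. An IASI of $G$ is an injective $f:V(G)\to 2^{\mathbb{N}_0}$ with $g_f(uv)=f(u)+f(v)$ injective on $E(G)$. The set-indexing number of an element is the cardinality of its set-label. An AP-set is a set whose elements form an arithmetic progression; the common difference of the set-label of an element is its deterministic index. An arithmetic IASI is an IASI under which all vertex and edge set-labels are AP-sets. The join $G_1+G_2$ has vertex set $V_1\cup V_2$ and edge set $E_1\cup E_2\cup\{uv:u\in V_1,v\in V_2\}$.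
   Formalization: The labelling equal to $f_1$ on $V(G_1)$ and to $f_2$ on $V(G_2)$ is assumed to be an IASI of the join $G_1+G_2$, with injective vertex labels and injective edge sums. The statement above fails without it. *)

theory Defs
  imports Main
begin

definition graph :: "'a set \<Rightarrow> 'a set set \<Rightarrow> bool" where
  "graph V E \<longleftrightarrow> finite V
     \<and> E \<subseteq> {{x, y} | x y. x \<in> V \<and> y \<in> V \<and> x \<noteq> y}
     \<and> (\<forall>v\<in>V. \<exists>e\<in>E. v \<in> e)"

definition join_V :: "'a set \<Rightarrow> 'a set \<Rightarrow> 'a set" where
  "join_V V1 V2 = V1 \<union> V2"

definition join_E :: "'a set \<Rightarrow> 'a set set \<Rightarrow> 'a set \<Rightarrow> 'a set set \<Rightarrow> 'a set set" where
  "join_E V1 E1 V2 E2 = E1 \<union> E2 \<union> {{u, v} | u v. u \<in> V1 \<and> v \<in> V2}"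

definition sumset :: "nat set \<Rightarrow> nat set \<Rightarrow> nat set" where
  "sumset A B = {a + b | a b. a \<in> A \<and> b \<in> B}"

definition iasi :: "'a set \<Rightarrow> 'a set set \<Rightarrow> ('a \<Rightarrow> nat set) \<Rightarrow> bool" where
  "iasi V E f \<longleftrightarrow> inj_on f V \<and> (\<forall>v\<in>V. finite (f v))
     \<and> (\<forall>u1 v1 u2 v2. {u1, v1} \<in> E \<longrightarrow> {u2, v2} \<in> E \<longrightarrow>
          sumset (f u1) (f v1) = sumset (f u2) (f v2) \<longrightarrow> {u1, v1} = {u2, v2})"

definition ap_set :: "nat set \<Rightarrow> bool" where
  "ap_set A \<longleftrightarrow> (\<exists>a d n. d > 0 \<and> n \<ge> 2 \<and> A = {a + i * d | i. i < n})"

definition det_index :: "nat set \<Rightarrow> nat" where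
  "det_index A = (THE d. d > 0 \<and> (\<exists>a n. n \<ge> 2 \<and> A = {a + i * d | i. i < n}))"

definition set_index_num :: "nat set \<Rightarrow> nat" where
  "set_index_num A = card A"

definition arithmetic_iasi :: "'a set \<Rightarrow> 'a set set \<Rightarrow> ('a \<Rightarrow> nat set) \<Rightarrow> bool" where
  "arithmetic_iasi V E f \<longleftrightarrow> iasi V E f \<and> (\<forall>v\<in>V. ap_set (f v))
     \<and> (\<forall>u v. {u, v} \<in> E \<longrightarrow> ap_set (sumset (f u) (f v)))"

end

theory Submission
  imports Defs
begin

(* Let A = AP(a,d,m) and B = AP(b,e,n) with d <= e.  Every element of A + B is a + b + i d + j e,
   so its least element is a + b and its second least is a + b + d; if A + B is an AP, these two
   elements fix its common difference to d.  Then a + b + e in A + B gives e = k d, and k <= m,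
   since otherwise a + b + m d would be a term of the progression that is not a sum.  Conversely,
   for e = k d with k <= m the indices i + j k (i < m, j < n) fill the whole interval
   [0, m + (n - 1) k).  For the join, edges inside G1 and G2 keep their labels, so the condition
   only concerns the new edges uv with u in V1 and v in V2. *)

definition AP :: "nat \<Rightarrow> nat \<Rightarrow> nat \<Rightarrow> nat set" where
  "AP a d n = {a + i * d | i. i < n}"

lemma AP_eq_image: "AP a d n = (\<lambda>i. a + i * d) ` {..<n}"
  unfolding AP_def by auto

lemma mem_AP_iff: "x \<in> AP a d n \<longleftrightarrow> (\<exists>i<n. x = a + i * d)"
  unfolding AP_def by auto

lemma ap_set_iff_AP: "ap_set A \<longleftrightarrow> (\<exists>a d n. d > 0 \<and> n \<ge> 2 \<and> A = AP a d n)"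
  unfolding ap_set_def AP_def ..

lemma card_AP:
  assumes "d > 0"
  shows "card (AP a d n) = n"
proof -
  have "inj_on (\<lambda>i. a + i * d) {..<n}"
    using assms by (auto simp: inj_on_def)
  then show ?thesis
    unfolding AP_eq_image by (simp add: card_image)
qed

lemma AP_first_two_terms:
  assumes "d > 0" and "n \<ge> 2"
  shows "a \<in> AP a d n" and "a + d \<in> AP a d n" and "\<And>x. x \<in> AP a d n \<Longrightarrow> x = a \<or> a + d \<le> x"
proof -
  show "a \<in> AP a d n" "a + d \<in> AP a d n"
    using assms unfolding AP_eq_image by (auto intro!: image_eqI[of _ _ 0] image_eqI[of _ _ 1])
  show "x = a \<or> a + d \<le> x" if "x \<in> AP a d n" for x
    using that unfolding AP_eq_image by (auto simp: gr0_conv_Suc)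
qed

lemma AP_start_step_unique:
  assumes "d > 0" and "n \<ge> 2" and "b \<in> AP a d n" and "s \<in> AP a d n" and "b < s"
    and gap: "\<And>x. x \<in> AP a d n \<Longrightarrow> x = b \<or> s \<le> x"
  shows "a = b" and "d = s - b"
proof -
  note AP = AP_first_two_terms[OF assms(1,2)]
  show "a = b"
    using gap[OF AP(1)] AP(3)[OF assms(3)] AP(3)[OF assms(4)] \<open>b < s\<close> by linarith
  then show "d = s - b"
    using gap[OF AP(2)] AP(3)[OF assms(4)] \<open>b < s\<close> \<open>d > 0\<close> by linarith
qed

lemma det_index_AP:
  assumes "d > 0" and "n \<ge> 2"
  shows "det_index (AP a d n) = d"
  unfolding det_index_def
proof (rule the_equality)
  show "0 < d \<and> (\<exists>a' n'. 2 \<le> n' \<and> AP a d n = {a' + i * d |i. i < n'})"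
    using assms unfolding AP_def by blast
next
  fix d' assume "0 < d' \<and> (\<exists>a' n'. 2 \<le> n' \<and> AP a d n = {a' + i * d' |i. i < n'})"
  then obtain a' n' where d': "d' > 0" "n' \<ge> 2" and eq: "AP a d n = AP a' d' n'"
    unfolding AP_def by blast
  note AP = AP_first_two_terms[OF assms, where a = a, unfolded eq]
  show "d' = d"
    using AP_start_step_unique(2)[OF d' AP(1,2)] AP(3) \<open>d > 0\<close> by simp
qed

lemma sumset_commute: "sumset A B = sumset B A"
  unfolding sumset_def by (auto intro: add.commute)

lemma sums_of_multiples_eq_lessThan:
  fixes k m n :: nat
  assumes "0 < k" and "k \<le> m" and "0 < n"
  shows "{i + j * k | i j. i < m \<and> j < n} = {..< m + (n - 1) * k}"
proof (intro set_eqI iffI)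
  fix t assume "t \<in> {i + j * k | i j. i < m \<and> j < n}"
  then obtain i j where "t = i + j * k" "i < m" "j \<le> n - 1"
    by auto
  then show "t \<in> {..< m + (n - 1) * k}"
    by (simp add: add_less_le_mono mult_right_mono)
next
  fix t assume t: "t \<in> {..< m + (n - 1) * k}"
  define j where "j = min (t div k) (n - 1)"
  have jk: "j * k \<le> t"
    using div_times_less_eq_dividend[of t k] mult_right_mono[of j "t div k" k]
    unfolding j_def by linarith
  have "t - j * k < m"
  proof (cases "t div k \<le> n - 1")
    case True
    then have "t - j * k = t mod k"
      unfolding j_def by (simp add: minus_div_mult_eq_mod)
    then show ?thesis
      using mod_less_divisor[OF \<open>0 < k\<close>, of t] \<open>k \<le> m\<close> by linarith
  next
    case False
    then have "j = n - 1"
      unfolding j_def by simp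
    with t have "t < m + j * k"
      by simp
    then show ?thesis
      using \<open>0 < k\<close> \<open>k \<le> m\<close> by linarith
  qed
  moreover have "j < n"
    unfolding j_def using \<open>0 < n\<close> by linarith
  moreover have "t = (t - j * k) + j * k"
    using jk by simp
  ultimately show "t \<in> {i + j * k | i j. i < m \<and> j < n}"
    by blast
qed

lemma mem_sumset_AP_iff:
  "x \<in> sumset (AP a d m) (AP b e n) \<longleftrightarrow> (\<exists>i<m. \<exists>j<n. x = a + b + i * d + j * e)"
proof -
  have "sumset (AP a d m) (AP b e n) = {(a + i * d) + (b + j * e) | i j. i < m \<and> j < n}"
    unfolding sumset_def AP_def by blast
  then show ?thesis
    by (auto simp: algebra_simps)
qed

lemma sumset_AP_memI:
  assumes "i < m" and "j < n"
  shows "a + b + i * d + j * e \<in> sumset (AP a d m) (AP b e n)"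
  unfolding mem_sumset_AP_iff using assms by blast

lemma sumset_AP_first_two_terms:
  assumes "d \<le> e" and "2 \<le> m" and "0 < n"
  shows "a + b \<in> sumset (AP a d m) (AP b e n)" and "a + b + d \<in> sumset (AP a d m) (AP b e n)"
    and "\<And>x. x \<in> sumset (AP a d m) (AP b e n) \<Longrightarrow> x = a + b \<or> a + b + d \<le> x"
proof -
  show "a + b \<in> sumset (AP a d m) (AP b e n)" "a + b + d \<in> sumset (AP a d m) (AP b e n)"
    using sumset_AP_memI[of 0 m 0 n a b d e] sumset_AP_memI[of 1 m 0 n a b d e] assms by simp_all
  show "x = a + b \<or> a + b + d \<le> x" if x: "x \<in> sumset (AP a d m) (AP b e n)" for x
  proof -
    obtain i j where "x = a + b + i * d + j * e"
      using x unfolding mem_sumset_AP_iff by blast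
    moreover have "i = 0 \<and> j = 0 \<or> d \<le> i * d + j * e"
      using \<open>d \<le> e\<close> by (cases i; cases j) auto
    ultimately show ?thesis
      by auto
  qed
qed

lemma sumset_AP_multiple_eq_AP:
  assumes "0 < k" and "k \<le> m" and "0 < n"
  shows "sumset (AP a d m) (AP b (k * d) n) = AP (a + b) d (m + (n - 1) * k)"
proof (rule set_eqI)
  fix x
  have "x \<in> sumset (AP a d m) (AP b (k * d) n) \<longleftrightarrow>
      (\<exists>t \<in> {i + j * k | i j. i < m \<and> j < n}. x = a + b + t * d)"
    unfolding mem_sumset_AP_iff by (fastforce simp: algebra_simps)
  also have "\<dots> \<longleftrightarrow> x \<in> AP (a + b) d (m + (n - 1) * k)"
    using assms by (auto simp: sums_of_multiples_eq_lessThan mem_AP_iff)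
  finally show "x \<in> sumset (AP a d m) (AP b (k * d) n) \<longleftrightarrow> x \<in> AP (a + b) d (m + (n - 1) * k)" .
qed

lemma ap_set_sumset_AP_imp_bounded_multiple:
  assumes "0 < d" and "d \<le> e" and "2 \<le> m" and "2 \<le> n"
    and "ap_set (sumset (AP a d m) (AP b e n))" (is "ap_set ?S")
  shows "\<exists>k. e = k * d \<and> k \<le> m"
proof -
  obtain c g N where "0 < g" "2 \<le> N" and S: "?S = AP c g N"
    using \<open>ap_set ?S\<close> unfolding ap_set_iff_AP by blast
  have "0 < n" and "a + b < a + b + d"
    using \<open>2 \<le> n\<close> \<open>0 < d\<close> by simp_all
  note first = sumset_AP_first_two_terms[OF \<open>d \<le> e\<close> \<open>2 \<le> m\<close> \<open>0 < n\<close>, where a = a and b = b, unfolded S]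
  have "c = a + b" and "g = d"
    using AP_start_step_unique[OF \<open>0 < g\<close> \<open>2 \<le> N\<close> first(1,2) \<open>a + b < a + b + d\<close> first(3)]
    by simp_all
  with S have S: "?S = AP (a + b) d N"
    by simp
  have "a + b + e \<in> ?S"
    using sumset_AP_memI[of 0 m 1 n a b d e] \<open>2 \<le> m\<close> \<open>2 \<le> n\<close> by simp
  then obtain k where "e = k * d" "k < N"
    unfolding S mem_AP_iff by auto
  moreover have "k \<le> m"
  proof (rule ccontr)
    assume "\<not> k \<le> m"
    with \<open>k < N\<close> have "a + b + m * d \<in> ?S"
      unfolding S mem_AP_iff by (metis less_trans not_le_imp_less)
    then obtain i j where "i < m" "m * d = i * d + j * e"
      unfolding mem_sumset_AP_iff by auto
    moreover have "m * d < e"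
      using \<open>e = k * d\<close> \<open>\<not> k \<le> m\<close> \<open>0 < d\<close> by simp
    ultimately show False
      using \<open>0 < d\<close> by (cases j) auto
  qed
  ultimately show ?thesis
    by blast
qed

lemma ap_set_sumset_AP_iff_le:
  assumes "0 < d" and "d \<le> e" and "2 \<le> m" and "2 \<le> n"
  shows "ap_set (sumset (AP a d m) (AP b e n)) \<longleftrightarrow> (\<exists>k. e = k * d \<and> k \<le> m)"
proof
  assume "ap_set (sumset (AP a d m) (AP b e n))"
  with assms show "\<exists>k. e = k * d \<and> k \<le> m"
    by (rule ap_set_sumset_AP_imp_bounded_multiple)
next
  assume "\<exists>k. e = k * d \<and> k \<le> m"
  then obtain k where e: "e = k * d" and "k \<le> m"
    by blast
  with assms have "0 < k"
    by (cases k) auto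
  have "0 < n" and "2 \<le> m + (n - 1) * k"
    using \<open>2 \<le> m\<close> \<open>2 \<le> n\<close> by linarith+
  with \<open>0 < d\<close> show "ap_set (sumset (AP a d m) (AP b e n))"
    unfolding e sumset_AP_multiple_eq_AP[OF \<open>0 < k\<close> \<open>k \<le> m\<close> \<open>0 < n\<close>] ap_set_iff_AP
    by blast
qed

lemma bounded_multiple_iff_symmetric:
  fixes d e m n :: nat
  assumes "0 < d" and "d \<le> e" and "1 \<le> m"
  shows "(\<exists>k. e = k * d \<and> k \<le> m) \<longleftrightarrow>
    (\<exists>k. k > 0 \<and> ((d = k * e \<and> k \<le> n) \<or> (e = k * d \<and> k \<le> m)))"
proof
  assume "\<exists>k. e = k * d \<and> k \<le> m"
  then obtain k where "e = k * d" "k \<le> m"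
    by blast
  moreover from this assms have "k > 0"
    by (cases k) auto
  ultimately show "\<exists>k. k > 0 \<and> ((d = k * e \<and> k \<le> n) \<or> (e = k * d \<and> k \<le> m))"
    by blast
next
  assume "\<exists>k. k > 0 \<and> ((d = k * e \<and> k \<le> n) \<or> (e = k * d \<and> k \<le> m))"
  then obtain k where "k > 0" and k: "(d = k * e \<and> k \<le> n) \<or> (e = k * d \<and> k \<le> m)"
    by blast
  show "\<exists>k. e = k * d \<and> k \<le> m"
  proof (cases "d = k * e")
    case True
    with \<open>d \<le> e\<close> have "k * e \<le> 1 * e"
      by simp
    moreover have "0 < e"
      using \<open>0 < d\<close> \<open>d \<le> e\<close> by simp
    ultimately have "k = 1"
      using \<open>0 < k\<close> by (simp only: mult_le_cancel2) simp
    with True have "e = 1 * d"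
      by simp
    with \<open>1 \<le> m\<close> show ?thesis
      by blast
  next
    case False
    with k show ?thesis
      by blast
  qed
qed

lemma ap_set_sumset_AP_iff:
  assumes "0 < d" and "0 < e" and "2 \<le> m" and "2 \<le> n"
  shows "ap_set (sumset (AP a d m) (AP b e n)) \<longleftrightarrow>
    (\<exists>k. k > 0 \<and> ((d = k * e \<and> k \<le> n) \<or> (e = k * d \<and> k \<le> m)))"
proof (cases "d \<le> e")
  case True
  have "ap_set (sumset (AP a d m) (AP b e n)) \<longleftrightarrow> (\<exists>k. e = k * d \<and> k \<le> m)"
    using ap_set_sumset_AP_iff_le[OF \<open>0 < d\<close> True \<open>2 \<le> m\<close> \<open>2 \<le> n\<close>] .
  also have "\<dots> \<longleftrightarrow> (\<exists>k. k > 0 \<and> ((d = k * e \<and> k \<le> n) \<or> (e = k * d \<and> k \<le> m)))"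
    using bounded_multiple_iff_symmetric[OF \<open>0 < d\<close> True] \<open>2 \<le> m\<close> by simp
  finally show ?thesis .
next
  case False
  then have "e \<le> d"
    by simp
  have "ap_set (sumset (AP a d m) (AP b e n)) \<longleftrightarrow> (\<exists>k. d = k * e \<and> k \<le> n)"
    using ap_set_sumset_AP_iff_le[OF \<open>0 < e\<close> \<open>e \<le> d\<close> \<open>2 \<le> n\<close> \<open>2 \<le> m\<close>]
    by (simp only: sumset_commute[of "AP a d m"])
  also have "\<dots> \<longleftrightarrow> (\<exists>k. k > 0 \<and> ((e = k * d \<and> k \<le> m) \<or> (d = k * e \<and> k \<le> n)))"
    using bounded_multiple_iff_symmetric[OF \<open>0 < e\<close> \<open>e \<le> d\<close>] \<open>2 \<le> n\<close> by simp
  finally show ?thesis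
    by blast
qed

lemma ap_set_sumset_iff:
  assumes "ap_set A" and "ap_set B"
  shows "ap_set (sumset A B) \<longleftrightarrow>
    (\<exists>k::nat. k > 0 \<and> ((det_index A = k * det_index B \<and> k \<le> set_index_num B)
      \<or> (det_index B = k * det_index A \<and> k \<le> set_index_num A)))"
proof -
  obtain a d m where "0 < d" "2 \<le> m" and A: "A = AP a d m"
    using assms(1) unfolding ap_set_iff_AP by blast
  obtain b e n where "0 < e" "2 \<le> n" and B: "B = AP b e n"
    using assms(2) unfolding ap_set_iff_AP by blast
  have "det_index A = d" "det_index B = e" "set_index_num A = m" "set_index_num B = n"
    unfolding A B set_index_num_def
    using det_index_AP card_AP \<open>0 < d\<close> \<open>2 \<le> m\<close> \<open>0 < e\<close> \<open>2 \<le> n\<close> by simp_all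
  then show ?thesis
    unfolding A B using ap_set_sumset_AP_iff[OF \<open>0 < d\<close> \<open>0 < e\<close> \<open>2 \<le> m\<close> \<open>2 \<le> n\<close>] by simp
qed

lemma graph_edge_endpoints:
  assumes "graph V E" and "{x, y} \<in> E"
  shows "x \<in> V" and "y \<in> V"
  using assms unfolding graph_def by (auto simp: doubleton_eq_iff)

lemma arithmetic_iasi_join:
  assumes "graph V1 E1" and "graph V2 E2" and "V1 \<inter> V2 = {}"
    and f1: "arithmetic_iasi V1 E1 f1" and f2: "arithmetic_iasi V2 E2 f2"
    and iasi: "iasi (join_V V1 V2) (join_E V1 E1 V2 E2) (\<lambda>x. if x \<in> V1 then f1 x else f2 x)"
    and cross: "\<And>u v. u \<in> V1 \<Longrightarrow> v \<in> V2 \<Longrightarrow> ap_set (sumset (f1 u) (f2 v))"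
  shows "arithmetic_iasi (join_V V1 V2) (join_E V1 E1 V2 E2) (\<lambda>x. if x \<in> V1 then f1 x else f2 x)"
    (is "arithmetic_iasi _ _ ?f")
proof -
  have "ap_set (sumset (?f x) (?f y))" if xy: "{x, y} \<in> join_E V1 E1 V2 E2" for x y
  proof -
    consider "{x, y} \<in> E1" | "{x, y} \<in> E2" | u v where "u \<in> V1" "v \<in> V2" "{x, y} = {u, v}"
      using xy unfolding join_E_def by blast
    then show ?thesis
    proof cases
      case 1
      with graph_edge_endpoints[OF \<open>graph V1 E1\<close>] f1 show ?thesis
        unfolding arithmetic_iasi_def by simp
    next
      case 2
      with graph_edge_endpoints[OF \<open>graph V2 E2\<close>] \<open>V1 \<inter> V2 = {}\<close> f2 have "x \<notin> V1" "y \<notin> V1"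
        by blast+
      with 2 f2 show ?thesis
        unfolding arithmetic_iasi_def by simp
    next
      case 3
      with \<open>V1 \<inter> V2 = {}\<close> have "v \<notin> V1"
        by blast
      with 3 cross[of u v] show ?thesis
        by (auto simp: doubleton_eq_iff sumset_commute)
    qed
  qed
  moreover have "ap_set (?f v)" if "v \<in> join_V V1 V2" for v
    using that f1 f2 unfolding join_V_def arithmetic_iasi_def by auto
  ultimately show ?thesis
    using iasi unfolding arithmetic_iasi_def by blast
qed

theorem mainTheorem3:
  fixes V1 V2 :: "'a set" and E1 E2 :: "'a set set" and f1 f2 :: "'a \<Rightarrow> nat set"
  assumes "graph V1 E1" and "graph V2 E2" and "V1 \<inter> V2 = {}"
    and "arithmetic_iasi V1 E1 f1" and "arithmetic_iasi V2 E2 f2"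
    and "iasi (join_V V1 V2) (join_E V1 E1 V2 E2) (\<lambda>x. if x \<in> V1 then f1 x else f2 x)"
  shows "(\<exists>f. arithmetic_iasi (join_V V1 V2) (join_E V1 E1 V2 E2) f
              \<and> (\<forall>v\<in>V1. f v = f1 v) \<and> (\<forall>v\<in>V2. f v = f2 v))
         \<longleftrightarrow> (\<forall>u\<in>V1. \<forall>v\<in>V2. \<exists>k::nat. k > 0 \<and>
               ((det_index (f1 u) = k * det_index (f2 v) \<and> k \<le> set_index_num (f2 v))
              \<or> (det_index (f2 v) = k * det_index (f1 u) \<and> k \<le> set_index_num (f1 u))))"
    (is "?extends \<longleftrightarrow> (\<forall>u\<in>V1. \<forall>v\<in>V2. ?steps u v)")
proof -
  have cross_iff: "ap_set (sumset (f1 u) (f2 v)) \<longleftrightarrow> ?steps u v" if "u \<in> V1" "v \<in> V2" for u v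
    using ap_set_sumset_iff that assms(4,5) unfolding arithmetic_iasi_def by blast
  show ?thesis
  proof
    assume ?extends
    then obtain f where f: "arithmetic_iasi (join_V V1 V2) (join_E V1 E1 V2 E2) f"
      and "\<forall>v\<in>V1. f v = f1 v" "\<forall>v\<in>V2. f v = f2 v"
      by blast
    show "\<forall>u\<in>V1. \<forall>v\<in>V2. ?steps u v"
    proof (intro ballI)
      fix u v assume "u \<in> V1" "v \<in> V2"
      then have "{u, v} \<in> join_E V1 E1 V2 E2"
        unfolding join_E_def by blast
      with f have "ap_set (sumset (f u) (f v))"
        unfolding arithmetic_iasi_def by blast
      with cross_iff \<open>u \<in> V1\<close> \<open>v \<in> V2\<close> show "?steps u v"
        using \<open>\<forall>v\<in>V1. f v = f1 v\<close> \<open>\<forall>v\<in>V2. f v = f2 v\<close> by simp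
    qed
  next
    assume "\<forall>u\<in>V1. \<forall>v\<in>V2. ?steps u v"
    with cross_iff have "ap_set (sumset (f1 u) (f2 v))" if "u \<in> V1" "v \<in> V2" for u v
      using that by blast
    with arithmetic_iasi_join[OF assms] show ?extends
      using \<open>V1 \<inter> V2 = {}\<close> by (intro exI[of _ "\<lambda>x. if x \<in> V1 then f1 x else f2 x"]) auto
  qed
qed

end
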